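(* For every $n\ge 3$, under the uniform model the expected Sackin index is $$E_U(S_n)=\frac{n}{2n-3}\,{}_3F_2\!\left(\begin{matrix}2,\ 2,\ 2-n\\ 1,\ 4-2n\end{matrix};2\right)=\frac{n}{2n-3}\sum_{k=0}^{n-2}\frac{(2)_k(2)_k(2-n)_k}{(1)_k(4-2n)_k}\cdot\frac{2^k}{k!},$$ where $(a)_k=a(a+1)\cdots(a+k-1)$ (the hypergeometric series terminates at $k=n-2$).
   Context: $\mathcal{BT}_n$ is the set of (isomorphism classes of) binary phylogenetic trees with leaves bijectively labeled by $\{1,\dots,n\}$ (rooted, every internal node with exactly two children); $|\mathcal{BT}_n|=(2n-3)!!$. The Sackin index is $S(T)=\sum_{i=1}^n\delta_T(i)$, where $\delta_T(i)$ is the number of arcs from the root to leaf $i$. $S_n$ is $S(T)$ for random $T\in\mathcal{BT}_n$. The uniform model gives every $T\in\mathcal{BT}_n$ probability $1/(2n-3)!!$; $E_U$ is expectation under it. ${}_pF_q$ denotes the generalized hypergeometric function $\sum_{k\ge0}\frac{(a_1)_k\cdots(a_p)_k}{(b_1)_k\cdots(b_q)_k}\frac{z^k}{k!}$. *)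

theory Defs
  imports Complex_Main
begin

text \<open>Rooted binary trees with leaf labels (plane representatives).\<close>
datatype ptree = Lf nat | Nd ptree ptree

fun leaves :: "ptree \<Rightarrow> nat list" where
  "leaves (Lf a) = [a]"
| "leaves (Nd l r) = leaves l @ leaves r"

fun leaf_depths :: "ptree \<Rightarrow> nat list" where
  "leaf_depths (Lf a) = [0]"
| "leaf_depths (Nd l r) = map Suc (leaf_depths l @ leaf_depths r)"

definition sackin :: "ptree \<Rightarrow> nat" where
  "sackin t = sum_list (leaf_depths t)"

inductive tree_iso :: "ptree \<Rightarrow> ptree \<Rightarrow> bool" where
  iso_leaf: "tree_iso (Lf a) (Lf a)"
| iso_node: "tree_iso l l' \<Longrightarrow> tree_iso r r' \<Longrightarrow> tree_iso (Nd l r) (Nd l' r')"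
| iso_swap: "tree_iso l l' \<Longrightarrow> tree_iso r r' \<Longrightarrow> tree_iso (Nd l r) (Nd r' l')"

definition labelled_trees :: "nat \<Rightarrow> ptree set" where
  "labelled_trees n = {t. distinct (leaves t) \<and> set (leaves t) = {1..n}}"

definition BT :: "nat \<Rightarrow> ptree set set" where
  "BT n = labelled_trees n // {(s, t). tree_iso s t}"

definition sackin_class :: "ptree set \<Rightarrow> nat" where
  "sackin_class C = the_elem (sackin ` C)"

definition E_U_sackin :: "nat \<Rightarrow> real" where
  "E_U_sackin n = (\<Sum>C\<in>BT n. real (sackin_class C)) / real (card (BT n))"

end

(*
  Every isomorphism class in BT n contains exactly 2^(n-1) plane
  trees (one per choice of orientation at each of the n-1 internal nodes), all
  with the same Sackin index, so E_U is the average Sackin index of the plane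
  trees with leaf set {1..n}.  Every such plane tree on n+1 leaves arises in
  exactly one way by grafting the leaf n+1 onto one of the 2n-1 edges (incl. a
  new root edge) of a plane tree on n leaves, on one of the two sides.  Summing
  over these 4n-2 grafts yields  E(n+1) = (n+1)(2 E(n) + 1)/(2n-1), E(1) = 0.

  On the hypergeometric side the summand is (k+1)^2 2^k (-N)_k/(-2N)_k with
  N = n-2.  A Gosper-type certificate telescopes and shows that the sum H N
  satisfies (2N+1) H(N+1) = 2(N+2) H N + (2N+1), which is exactly the tree
  recurrence for n/(2n-3) H(n-2).
*)
theory Submission
  imports Defs
begin

section \<open>The terminating hypergeometric sum\<close>

text \<open>The ratio (-N)_k / (-2N)_k of rising factorials, written as a product.\<close>
definition hg_ratio :: "nat \<Rightarrow> nat \<Rightarrow> real" where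
  "hg_ratio N k = (\<Prod>i<k. (real N - real i) / (2 * real N - real i))"

text \<open>A shifted variant of the same product, in which the telescoping certificate lives.\<close>
definition hg_ratio' :: "nat \<Rightarrow> nat \<Rightarrow> real" where
  "hg_ratio' N k = (\<Prod>i<k. (real N + 1 - real i) / (2 * real N - real i))"

text \<open>The sum  H N = \<Sum>k. (k+1)^2 2^k (-N)_k/(-2N)_k, i.e. the 3F2 of the theorem for N = n-2.\<close>
definition hg_sum :: "nat \<Rightarrow> real" where
  "hg_sum N = (\<Sum>k=0..N. (real k + 1)^2 * 2^k * hg_ratio N k)"

lemma hg_ratio_Suc: "hg_ratio N (Suc k) = hg_ratio N k * ((real N - real k) / (2 * real N - real k))"
  by (simp add: hg_ratio_def)

lemma hg_ratio'_Suc: "hg_ratio' N (Suc k) = hg_ratio' N k * ((real N + 1 - real k) / (2 * real N - real k))"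
  by (simp add: hg_ratio'_def)

lemma hg_ratio_vanishes: "hg_ratio N (Suc N) = 0"
  by (simp add: hg_ratio_def)

lemma hg_ratio_via_shift: "hg_ratio N k * (real N + 1) = hg_ratio' N k * (real N + 1 - real k)"
proof (induction k)
  case 0 then show ?case by (simp add: hg_ratio_def hg_ratio'_def)
next
  case (Suc k)
  have "hg_ratio N (Suc k) * (real N + 1)
      = (hg_ratio N k * (real N + 1)) * ((real N - real k) / (2 * real N - real k))"
    by (simp add: hg_ratio_Suc)
  also have "\<dots> = hg_ratio' N k * (real N + 1 - real k) * ((real N - real k) / (2 * real N - real k))"
    using Suc by simp
  also have "\<dots> = hg_ratio' N (Suc k) * (real N + 1 - real (Suc k))"
    by (simp add: hg_ratio'_Suc)
  finally show ?case .
qed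

lemma hg_ratio_Suc_via_shift:
  assumes "N \<ge> 1" "k \<le> N + 1"
  shows "hg_ratio (Suc N) k * ((2*real N+2)*(2*real N+1))
       = hg_ratio' N k * ((2*real N+2-real k)*(2*real N+1-real k))"
  using assms(2)
proof (induction k)
  case 0 then show ?case by (simp add: hg_ratio_def hg_ratio'_def)
next
  case (Suc k)
  then have k: "k \<le> N" by simp
  have nz: "2 * real N - real k \<noteq> 0" "2 * real (Suc N) - real k \<noteq> 0"
    using k assms(1) by simp_all
  have "hg_ratio (Suc N) (Suc k) * ((2*real N+2)*(2*real N+1))
      = (hg_ratio (Suc N) k * ((2*real N+2)*(2*real N+1)))
        * ((real (Suc N) - real k) / (2 * real (Suc N) - real k))"
    by (simp add: hg_ratio_Suc)
  also have "\<dots> = hg_ratio' N k * ((2*real N+2-real k)*(2*real N+1-real k))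
        * ((real (Suc N) - real k) / (2 * real (Suc N) - real k))"
    using Suc k by simp
  also have "\<dots> = hg_ratio' N k * (2*real N+1-real k) * (real N + 1 - real k)"
    using nz(2) by (simp add: field_simps)
  also have "\<dots> = hg_ratio' N (Suc k) * ((2*real N+2-real (Suc k))*(2*real N+1-real (Suc k)))"
    using nz(1) by (simp add: hg_ratio'_Suc field_simps)
  finally show ?case .
qed

text \<open>The polynomial part of the Gosper certificate (quartic in m).\<close>
definition cert_poly :: "real \<Rightarrow> real \<Rightarrow> real" where
  "cert_poly N m = -(N+1)*(2*N+1) - (N-1)*m - (10*N-7)*m*(m-1)/2
     - (6*N-21)*m*(m-1)*(m-2)/6 + m*(m-1)*(m-2)*(m-3)/2"

text \<open>The rational-function identity behind the telescoping (after dividing by 2^k hg_ratio' N k).\<close>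
lemma cert_poly_identity:
  fixes N k :: real
  assumes "N \<ge> 0" "k \<noteq> 2 * N"
  shows "(2*N+1)*(k+1)^2*(2*N+2-k)*(2*N+1-k)/((2*N+2)*(2*N+1)) - 2*(N+2)*(k+1)^2*(N+1-k)/(N+1)
       = 2 * cert_poly N (k+1) * (N+1-k) / ((2*N-k)*(N+1)) - cert_poly N k / (N+1)"
proof -
  define x where "x = 2*N - k"
  define y where "y = N + 1"
  have subst: "k = 2*y - 2 - x" "N = y - 1" by (simp_all add: x_def y_def)
  have nz: "x \<noteq> 0" "y \<noteq> 0" "2*y - 1 \<noteq> 0" "y + 1 \<noteq> 0" "2*y \<noteq> 0"
    using assms by (auto simp: x_def y_def)
  show ?thesis unfolding cert_poly_def subst using nz
    by (simp add: field_simps) (simp add: algebra_simps power2_eq_square)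
qed

lemma hg_term_telescopes:
  assumes N: "N \<ge> 2" and k: "k \<le> N + 1"
  defines "G \<equiv> \<lambda>k. cert_poly (real N) (real k) * 2^k * hg_ratio' N k / (real N + 1)"
  shows "(2*real N+1) * ((real k + 1)^2 * 2^k * hg_ratio (Suc N) k)
         - 2*(real N+2) * ((real k + 1)^2 * 2^k * hg_ratio N k) = G (Suc k) - G k"
proof -
  have a: "hg_ratio (Suc N) k = hg_ratio' N k * ((2*real N+2-real k)*(2*real N+1-real k))
                                / ((2*real N+2)*(2*real N+1))"
    using hg_ratio_Suc_via_shift[of N k] N k by (simp add: eq_divide_eq)
  have b: "hg_ratio N k = hg_ratio' N k * (real N + 1 - real k) / (real N + 1)"
    using hg_ratio_via_shift[of N k] by (simp add: eq_divide_eq)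
  have id: "(2*real N+1)*(real k+1)^2*(2*real N+2-real k)*(2*real N+1-real k)/((2*real N+2)*(2*real N+1))
           - 2*(real N+2)*(real k+1)^2*(real N+1-real k)/(real N+1)
         = 2 * cert_poly (real N) (real k + 1) * (real N+1-real k) / ((2*real N-real k)*(real N+1))
           - cert_poly (real N) (real k) / (real N+1)"
    by (rule cert_poly_identity) (use N k in auto)
  have "(2*real N+1) * ((real k + 1)^2 * 2^k * hg_ratio (Suc N) k)
        - 2*(real N+2) * ((real k + 1)^2 * 2^k * hg_ratio N k)
      = (2^k * hg_ratio' N k) *
        ((2*real N+1)*(real k+1)^2*(2*real N+2-real k)*(2*real N+1-real k)/((2*real N+2)*(2*real N+1))
         - 2*(real N+2)*(real k+1)^2*(real N+1-real k)/(real N+1))"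
    unfolding a b by (simp add: algebra_simps)
  also have "\<dots> = G (Suc k) - G k"
    unfolding id G_def by (simp add: hg_ratio'_Suc algebra_simps)
  finally show ?thesis .
qed

lemma hg_sum_rec: "(2*real N+1) * hg_sum (Suc N) = 2*(real N+2) * hg_sum N + (2*real N+1)"
proof (cases "N \<ge> 2")
  case False
  then have "N = 0 \<or> N = 1" by auto
  then show ?thesis by (auto simp: hg_sum_def hg_ratio_def numeral_2_eq_2)
next
  case N: True
  define G where "G k = cert_poly (real N) (real k) * 2^k * hg_ratio' N k / (real N + 1)" for k
  have extend: "hg_sum N = (\<Sum>k=0..Suc N. (real k + 1)^2 * 2^k * hg_ratio N k)"
    by (simp add: hg_sum_def hg_ratio_vanishes)
  have "(2*real N+1) * hg_sum (Suc N) - 2*(real N+2) * hg_sum N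
     = (\<Sum>k=0..Suc N. (2*real N+1) * ((real k + 1)^2 * 2^k * hg_ratio (Suc N) k)
                       - 2*(real N+2) * ((real k + 1)^2 * 2^k * hg_ratio N k))"
    unfolding extend hg_sum_def[of "Suc N"] by (simp only: sum_subtractf sum_distrib_left)
  also have "\<dots> = (\<Sum>k=0..Suc N. G (Suc k) - G k)"
    by (rule sum.cong) (use hg_term_telescopes[OF N] in \<open>auto simp: G_def\<close>)
  also have "\<dots> = G (Suc (Suc N)) - G 0"
    by (rule sum_Suc_diff) simp
  also have "\<dots> = 2*real N + 1"
    by (simp add: G_def cert_poly_def hg_ratio'_def field_simps)
  finally show ?thesis by simp
qed


section \<open>Plane trees: growing a tree by grafting a new leaf\<close>

text \<open>All plane trees obtained from t by attaching a new leaf x on either side of an edge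
  of t (the edge above the root included).  For t with m leaves there are 4m-2 of them.\<close>
fun graft :: "nat \<Rightarrow> ptree \<Rightarrow> ptree list" where
  "graft x (Lf a) = [Nd (Lf x) (Lf a), Nd (Lf a) (Lf x)]"
| "graft x (Nd l r) = [Nd (Lf x) (Nd l r), Nd (Nd l r) (Lf x)]
      @ map (\<lambda>l'. Nd l' r) (graft x l) @ map (\<lambda>r'. Nd l r') (graft x r)"

fun prune :: "nat \<Rightarrow> ptree \<Rightarrow> ptree" where
  "prune x (Lf a) = Lf a"
| "prune x (Nd l r) = (if l = Lf x then r else if r = Lf x then l
      else if x \<in> set (leaves l) then Nd (prune x l) r else Nd l (prune x r))"

lemma leaves_nonempty: "leaves t \<noteq> []"
  by (induct t) auto

lemma graft_is_node: "u \<in> set (graft x t) \<Longrightarrow> \<exists>l r. u = Nd l r"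
  by (cases t) auto

lemma graft_leaves:
  "u \<in> set (graft x t) \<Longrightarrow> \<exists>as bs. leaves t = as @ bs \<and> leaves u = as @ x # bs"
proof (induction t arbitrary: u)
  case (Lf a) then show ?case by (auto intro: exI[of _ "[]"] exI[of _ "[a]"])
next
  case (Nd l r)
  from Nd.prems consider "u = Nd (Lf x) (Nd l r)" | "u = Nd (Nd l r) (Lf x)"
    | l' where "l' \<in> set (graft x l)" "u = Nd l' r"
    | r' where "r' \<in> set (graft x r)" "u = Nd l r'"
    by auto
  then show ?case
  proof cases
    case 1 then show ?thesis by (intro exI[of _ "[]"] exI[of _ "leaves (Nd l r)"]) auto
  next
    case 2 then show ?thesis by (intro exI[of _ "leaves (Nd l r)"] exI[of _ "[]"]) auto
  next
    case 3
    then obtain as bs where "leaves l = as @ bs" "leaves l' = as @ x # bs" using Nd.IH(1) by blast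
    then show ?thesis using 3 by (intro exI[of _ as] exI[of _ "bs @ leaves r"]) auto
  next
    case 4
    then obtain as bs where "leaves r = as @ bs" "leaves r' = as @ x # bs" using Nd.IH(2) by blast
    then show ?thesis using 4 by (intro exI[of _ "leaves l @ as"] exI[of _ bs]) auto
  qed
qed

lemma graft_set_leaves: "u \<in> set (graft x t) \<Longrightarrow> set (leaves u) = insert x (set (leaves t))"
  by (drule graft_leaves) auto

lemma graft_length_leaves: "u \<in> set (graft x t) \<Longrightarrow> length (leaves u) = Suc (length (leaves t))"
  by (drule graft_leaves) auto

lemma graft_distinct_leaves:
  "u \<in> set (graft x t) \<Longrightarrow> distinct (leaves u) \<longleftrightarrow> x \<notin> set (leaves t) \<and> distinct (leaves t)"
  by (drule graft_leaves) auto

lemma prune_graft: "x \<notin> set (leaves t) \<Longrightarrow> u \<in> set (graft x t) \<Longrightarrow> prune x u = t"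
proof (induction t arbitrary: u)
  case (Lf a) then show ?case by auto
next
  case (Nd l r)
  from Nd.prems(2) consider "u = Nd (Lf x) (Nd l r)" | "u = Nd (Nd l r) (Lf x)"
    | l' where "l' \<in> set (graft x l)" "u = Nd l' r"
    | r' where "r' \<in> set (graft x r)" "u = Nd l r'"
    by auto
  then show ?case
  proof cases
    case 3
    then have "l' \<noteq> Lf x" "r \<noteq> Lf x" "x \<in> set (leaves l')"
      using graft_is_node[of l' x l] graft_set_leaves[of l' x l] Nd.prems(1) by auto
    then show ?thesis using 3 Nd by auto
  next
    case 4
    then have "l \<noteq> Lf x" "r' \<noteq> Lf x" "x \<notin> set (leaves l)"
      using graft_is_node[of r' x r] Nd.prems(1) by auto
    then show ?thesis using 4 Nd by auto
  qed (use Nd.prems in auto)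
qed

lemma graft_prune:
  "distinct (leaves u) \<Longrightarrow> x \<in> set (leaves u) \<Longrightarrow> u \<noteq> Lf x \<Longrightarrow> u \<in> set (graft x (prune x u))"
proof (induction u)
  case (Lf a) then show ?case by auto
next
  case (Nd l r)
  consider "l = Lf x" | "r = Lf x" | "l \<noteq> Lf x" "r \<noteq> Lf x" "x \<in> set (leaves l)"
    | "l \<noteq> Lf x" "r \<noteq> Lf x" "x \<in> set (leaves r)" "x \<notin> set (leaves l)"
    using Nd.prems by auto
  then show ?case
  proof cases
    case 1 then show ?thesis by (cases r) auto
  next
    case 2 then show ?thesis by (cases l) auto
  next
    case 3
    then have "l \<in> set (graft x (prune x l))" using Nd by auto
    then show ?thesis using 3 by (cases "prune x l") auto
  next
    case 4
    then have "r \<in> set (graft x (prune x r))" using Nd by auto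
    then show ?thesis using 4 by (cases "prune x l"; cases "prune x r") auto
  qed
qed

lemma distinct_graft: "x \<notin> set (leaves t) \<Longrightarrow> distinct (graft x t)"
proof (induction t)
  case (Lf a) then show ?case by auto
next
  case (Nd l r)
  have sides: "Nd l' r \<noteq> Nd l r'" if "l' \<in> set (graft x l)" "r' \<in> set (graft x r)" for l' r'
    using graft_set_leaves[OF that(1)] Nd.prems by auto
  have "Nd (Lf x) (Nd l r) \<notin> (\<lambda>l'. Nd l' r) ` set (graft x l)" using graft_is_node[of _ x l] by auto
  moreover have "Nd (Nd l r) (Lf x) \<notin> (\<lambda>l'. Nd l' r) ` set (graft x l)" using Nd.prems by auto
  moreover have "Nd (Lf x) (Nd l r) \<notin> (\<lambda>r'. Nd l r') ` set (graft x r)" using Nd.prems by auto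
  moreover have "Nd (Nd l r) (Lf x) \<notin> (\<lambda>r'. Nd l r') ` set (graft x r)" using graft_is_node[of _ x r] by auto
  moreover have "l \<notin> set (graft x l)" "r \<notin> set (graft x r)"
    using graft_set_leaves[of l x l] graft_set_leaves[of r x r] Nd.prems by auto
  ultimately show ?case using Nd sides by (auto simp: distinct_map inj_on_def)
qed

lemma length_graft: "length (graft x t) + 2 = 4 * length (leaves t)"
  by (induction t) auto

lemma sackin_Lf: "sackin (Lf a) = 0"
  by (simp add: sackin_def)

lemma sackin_Nd: "sackin (Nd l r) = sackin l + sackin r + length (leaves l) + length (leaves r)"
proof -
  have "length (leaf_depths t) = length (leaves t)" for t
    by (induction t) auto
  then show ?thesis by (simp add: sackin_def sum_list_Suc)
qed

lemma sum_list_map_shift: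
  "(\<And>y. y \<in> set xs \<Longrightarrow> f y = g y + c) \<Longrightarrow> sum_list (map f xs) = sum_list (map g xs) + length xs * (c::nat)"
  by (induction xs) auto

lemma sackin_sum_graft:
  "sum_list (map sackin (graft x t)) = 2 * (length (leaves t) + 1) * (2 * sackin t + 1)"
proof (induction t)
  case (Lf a) then show ?case by (simp add: sackin_Lf sackin_Nd)
next
  case (Nd l r)
  let ?a = "length (leaves l)" and ?b = "length (leaves r)"
  have left: "sum_list (map (sackin \<circ> (\<lambda>l'. Nd l' r)) (graft x l))
      = sum_list (map sackin (graft x l)) + length (graft x l) * (sackin r + ?a + 1 + ?b)"
    by (rule sum_list_map_shift) (auto simp: sackin_Nd graft_length_leaves)
  have right: "sum_list (map (sackin \<circ> (\<lambda>r'. Nd l r')) (graft x r))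
      = sum_list (map sackin (graft x r)) + length (graft x r) * (sackin l + ?a + ?b + 1)"
    by (rule sum_list_map_shift) (auto simp: sackin_Nd graft_length_leaves)
  obtain a' b' where ab: "?a = Suc a'" "?b = Suc b'"
    using leaves_nonempty[of l] leaves_nonempty[of r] by (cases ?a; cases ?b) auto
  have len: "length (graft x l) = 4*a'+2" "length (graft x r) = 4*b'+2"
    using length_graft[of x l] length_graft[of x r] ab by auto
  show ?case
    using left right Nd.IH unfolding len ab by (simp add: sackin_Nd sackin_Lf ab algebra_simps)
qed

lemma labelled_trees_length: "t \<in> labelled_trees m \<Longrightarrow> length (leaves t) = m"
  using distinct_card[of "leaves t"] by (auto simp: labelled_trees_def)

lemma labelled_trees_fresh: "t \<in> labelled_trees m \<Longrightarrow> Suc m \<notin> set (leaves t)"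
  by (auto simp: labelled_trees_def)

lemma labelled_trees_0: "labelled_trees 0 = {}"
  using leaves_nonempty by (auto simp: labelled_trees_def)

lemma labelled_trees_1: "labelled_trees (Suc 0) = {Lf 1}"
proof
  show "labelled_trees (Suc 0) \<subseteq> {Lf 1}"
  proof
    fix t assume t: "t \<in> labelled_trees (Suc 0)"
    then have "length (leaves t) = 1" "set (leaves t) = {1}"
      using labelled_trees_length by (auto simp: labelled_trees_def)
    then show "t \<in> {Lf 1}"
    proof (cases t)
      case (Nd l r)
      then have "length (leaves l) + length (leaves r) = 1"
        using \<open>length (leaves t) = 1\<close> by simp
      then show ?thesis using leaves_nonempty[of l] leaves_nonempty[of r] by (simp add: add_is_1)
    qed auto
  qed
qed (auto simp: labelled_trees_def)

lemma labelled_trees_Suc: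
  assumes "m \<ge> 1"
  shows "labelled_trees (Suc m) = (\<Union>t\<in>labelled_trees m. set (graft (Suc m) t))"
proof
  show "(\<Union>t\<in>labelled_trees m. set (graft (Suc m) t)) \<subseteq> labelled_trees (Suc m)"
  proof safe
    fix t u assume t: "t \<in> labelled_trees m" and u: "u \<in> set (graft (Suc m) t)"
    then show "u \<in> labelled_trees (Suc m)"
      using labelled_trees_fresh[OF t] graft_distinct_leaves[OF u] graft_set_leaves[OF u]
      by (auto simp: labelled_trees_def)
  qed
next
  show "labelled_trees (Suc m) \<subseteq> (\<Union>t\<in>labelled_trees m. set (graft (Suc m) t))"
  proof
    fix u assume u: "u \<in> labelled_trees (Suc m)"
    then have d: "distinct (leaves u)" "set (leaves u) = {1..Suc m}"
      by (auto simp: labelled_trees_def)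
    have "1 \<in> set (leaves u)" using d assms by auto
    then have "u \<noteq> Lf (Suc m)" using assms by auto
    then have ui: "u \<in> set (graft (Suc m) (prune (Suc m) u))"
      using graft_prune d by auto
    have "Suc m \<notin> set (leaves (prune (Suc m) u))" "distinct (leaves (prune (Suc m) u))"
      using graft_distinct_leaves[OF ui] d by auto
    moreover have "set (leaves (prune (Suc m) u)) = {1..Suc m} - {Suc m}"
      using graft_set_leaves[OF ui] d(2) calculation(1) by blast
    moreover have "{1..Suc m} - {Suc m} = {1..m}" by auto
    ultimately have "prune (Suc m) u \<in> labelled_trees m"
      by (auto simp: labelled_trees_def)
    then show "u \<in> (\<Union>t\<in>labelled_trees m. set (graft (Suc m) t))" using ui by blast
  qed
qed

lemma finite_labelled_trees: "finite (labelled_trees m)"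
proof (induction m)
  case (Suc m)
  then show ?case
    using labelled_trees_1 labelled_trees_Suc[of m] by (cases "m = 0") auto
qed (simp add: labelled_trees_0)

lemma graft_disjoint:
  assumes "t \<in> labelled_trees m" "t' \<in> labelled_trees m" "t \<noteq> t'"
  shows "set (graft (Suc m) t) \<inter> set (graft (Suc m) t') = {}"
  using prune_graft labelled_trees_fresh assms by blast

lemma card_graft:
  "t \<in> labelled_trees m \<Longrightarrow> card (set (graft (Suc m) t)) = 4*m - 2"
  using distinct_card[OF distinct_graft[OF labelled_trees_fresh]] length_graft[of "Suc m" t]
    labelled_trees_length[of t m] by simp

lemma card_labelled_trees_Suc:
  assumes "m \<ge> 1"
  shows "card (labelled_trees (Suc m)) = (4*m-2) * card (labelled_trees m)"
proof -
  have "card (labelled_trees (Suc m)) = (\<Sum>t\<in>labelled_trees m. card (set (graft (Suc m) t)))"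
    unfolding labelled_trees_Suc[OF assms]
    by (rule card_UN_disjoint) (use finite_labelled_trees graft_disjoint in auto)
  then show ?thesis by (simp add: card_graft)
qed

lemma card_labelled_trees_pos: "m \<ge> 1 \<Longrightarrow> card (labelled_trees m) > 0"
proof (induction m rule: nat_induct_at_least)
  case base then show ?case by (simp add: labelled_trees_1)
next
  case (Suc m) then show ?case using card_labelled_trees_Suc[of m] by simp
qed

lemma sackin_sum_labelled_trees_Suc:
  assumes "m \<ge> 1"
  shows "(\<Sum>t\<in>labelled_trees (Suc m). sackin t)
       = 2*(m+1) * (2*(\<Sum>t\<in>labelled_trees m. sackin t) + card (labelled_trees m))"
proof -
  have "(\<Sum>t\<in>labelled_trees (Suc m). sackin t)
      = (\<Sum>t\<in>labelled_trees m. \<Sum>u\<in>set (graft (Suc m) t). sackin u)"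
    unfolding labelled_trees_Suc[OF assms]
    by (rule sum.UNION_disjoint) (use finite_labelled_trees graft_disjoint in auto)
  also have "\<dots> = (\<Sum>t\<in>labelled_trees m. 2*(m+1)*(2*sackin t + 1))"
  proof (rule sum.cong)
    fix t assume t: "t \<in> labelled_trees m"
    then have "(\<Sum>u\<in>set (graft (Suc m) t). sackin u) = sum_list (map sackin (graft (Suc m) t))"
      using sum_list_distinct_conv_sum_set distinct_graft labelled_trees_fresh by metis
    then show "(\<Sum>u\<in>set (graft (Suc m) t). sackin u) = 2*(m+1)*(2*sackin t + 1)"
      using sackin_sum_graft[of "Suc m" t] labelled_trees_length[OF t] by simp
  qed simp
  also have "\<dots> = 2*(m+1) * (\<Sum>t\<in>labelled_trees m. 2*sackin t + 1)"
    by (rule sum_distrib_left[symmetric])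
  also have "(\<Sum>t\<in>labelled_trees m. 2*sackin t + 1)
           = 2*(\<Sum>t\<in>labelled_trees m. sackin t) + card (labelled_trees m)"
    by (simp only: sum.distrib sum_distrib_left[symmetric] card_eq_sum)
  finally show ?thesis .
qed

section \<open>Isomorphism classes\<close>

fun iso_class :: "ptree \<Rightarrow> ptree set" where
  "iso_class (Lf a) = {Lf a}"
| "iso_class (Nd l r) = (\<lambda>(a,b). Nd a b) ` (iso_class l \<times> iso_class r)
                      \<union> (\<lambda>(a,b). Nd b a) ` (iso_class l \<times> iso_class r)"

lemma iso_class_iff: "t \<in> iso_class s \<longleftrightarrow> tree_iso s t"
proof
  show "t \<in> iso_class s \<Longrightarrow> tree_iso s t"
    by (induction s arbitrary: t) (auto intro: tree_iso.intros)
  show "tree_iso s t \<Longrightarrow> t \<in> iso_class s"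
    by (induction rule: tree_iso.induct) auto
qed

lemma iso_class_invariants:
  "t \<in> iso_class s \<Longrightarrow> set (leaves t) = set (leaves s) \<and> length (leaves t) = length (leaves s)
     \<and> (distinct (leaves t) \<longleftrightarrow> distinct (leaves s)) \<and> sackin t = sackin s"
proof (induction s arbitrary: t)
  case (Nd l r)
  from Nd.prems obtain a b where ab: "a \<in> iso_class l" "b \<in> iso_class r" "t = Nd a b \<or> t = Nd b a"
    by auto
  from Nd.IH(1)[OF ab(1)] Nd.IH(2)[OF ab(2)] ab(3) show ?case by (auto simp: sackin_Nd)
qed auto

lemma iso_class_self: "s \<in> iso_class s"
  by (induction s) auto

lemma iso_class_eq: "t \<in> iso_class s \<Longrightarrow> iso_class t = iso_class s"
proof (induction s arbitrary: t)
  case (Nd l r)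
  from Nd.prems obtain a b where ab: "a \<in> iso_class l" "b \<in> iso_class r" "t = Nd a b \<or> t = Nd b a"
    by auto
  from Nd.IH(1)[OF ab(1)] Nd.IH(2)[OF ab(2)] ab(3) show ?case by auto
qed auto

text \<open>With distinct labels no swap is trivial, so a class has 2^(m-1) members for m leaves.\<close>
lemma card_iso_class:
  "distinct (leaves s) \<Longrightarrow> finite (iso_class s) \<and> card (iso_class s) = 2^(length (leaves s) - 1)"
proof (induction s)
  case (Nd l r)
  let ?A = "iso_class l \<times> iso_class r"
  have dl: "distinct (leaves l)" "distinct (leaves r)" "set (leaves l) \<inter> set (leaves r) = {}"
    using Nd.prems by auto
  have fin: "finite (iso_class l)" "finite (iso_class r)"
    and card: "card (iso_class l) = 2^(length (leaves l) - 1)" "card (iso_class r) = 2^(length (leaves r) - 1)"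
    using Nd.IH dl by auto
  have inj: "inj_on (\<lambda>(a,b). Nd a b) ?A" "inj_on (\<lambda>(a,b). Nd b a) ?A"
    by (auto simp: inj_on_def)
  have disj: "(\<lambda>(a,b). Nd a b) ` ?A \<inter> (\<lambda>(a,b). Nd b a) ` ?A = {}"
  proof (rule ccontr)
    assume "(\<lambda>(a,b). Nd a b) ` ?A \<inter> (\<lambda>(a,b). Nd b a) ` ?A \<noteq> {}"
    then obtain b' where "b' \<in> iso_class l" "b' \<in> iso_class r" by auto
    then have "set (leaves l) = set (leaves r)" using iso_class_invariants by metis
    then show False using dl(3) leaves_nonempty[of l] by simp
  qed
  obtain a' b' where ab: "length (leaves l) = Suc a'" "length (leaves r) = Suc b'"
    using leaves_nonempty[of l] leaves_nonempty[of r]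
    by (cases "length (leaves l)"; cases "length (leaves r)") auto
  have "card (iso_class (Nd l r)) = card ?A + card ?A"
    using card_Un_disjoint[OF _ _ disj] card_image[OF inj(1)] card_image[OF inj(2)] fin by simp
  also have "\<dots> = 2^(length (leaves (Nd l r)) - 1)"
    using fin card ab by (simp add: card_cartesian_product power_add)
  finally show ?case using fin by simp
qed auto

lemma BT_eq: "BT n = iso_class ` labelled_trees n"
proof -
  have "{(s, t). tree_iso s t} `` {t} = iso_class t" for t
    using iso_class_iff by auto
  then show ?thesis unfolding BT_def quotient_def by auto
qed

lemma Union_BT: "\<Union>(BT n) = labelled_trees n"
  unfolding BT_eq using iso_class_invariants iso_class_self
  by (fastforce simp: labelled_trees_def)

lemma BT_disjoint: "C \<in> BT n \<Longrightarrow> D \<in> BT n \<Longrightarrow> C \<noteq> D \<Longrightarrow> C \<inter> D = {}"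
  unfolding BT_eq using iso_class_eq by blast

lemma BT_class:
  assumes "C \<in> BT n"
  shows "finite C" "card C = 2^(n-1)" "\<And>u. u \<in> C \<Longrightarrow> sackin u = sackin_class C"
proof -
  obtain t where t: "t \<in> labelled_trees n" "C = iso_class t" using assms BT_eq by auto
  have d: "distinct (leaves t)" "length (leaves t) = n"
    using t labelled_trees_length by (auto simp: labelled_trees_def)
  show "finite C" "card C = 2^(n-1)" using card_iso_class[OF d(1)] d t by auto
  have "sackin ` C = {sackin t}" using t iso_class_invariants iso_class_self by blast
  then show "\<And>u. u \<in> C \<Longrightarrow> sackin u = sackin_class C"
    by (auto simp: sackin_class_def)
qed

lemma E_U_sackin_plane:
  "E_U_sackin n = real (\<Sum>t\<in>labelled_trees n. sackin t) / real (card (labelled_trees n))"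
proof -
  have fin: "finite (BT n)" "\<forall>C\<in>BT n. finite C"
    using finite_labelled_trees BT_class(1) by (auto simp: BT_eq)
  have "(\<Sum>t\<in>labelled_trees n. sackin t) = (\<Sum>C\<in>BT n. \<Sum>u\<in>C. sackin u)"
    unfolding Union_BT[symmetric] by (rule sum.Union_disjoint[simplified]) (use fin BT_disjoint in auto)
  also have "\<dots> = 2^(n-1) * (\<Sum>C\<in>BT n. sackin_class C)"
    by (simp add: BT_class sum_distrib_left)
  finally have sum: "(\<Sum>t\<in>labelled_trees n. sackin t) = 2^(n-1) * (\<Sum>C\<in>BT n. sackin_class C)" .
  have "card (labelled_trees n) = (\<Sum>C\<in>BT n. card C)"
    unfolding Union_BT[symmetric]
    by (rule card_Union_disjoint) (use fin BT_disjoint in \<open>auto simp: pairwise_def disjnt_def\<close>)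
  also have "\<dots> = 2^(n-1) * card (BT n)"
    by (simp add: BT_class)
  finally have card: "card (labelled_trees n) = 2^(n-1) * card (BT n)" .
  show ?thesis
    unfolding E_U_sackin_def sum card by (simp add: of_nat_sum)
qed

lemma E_U_sackin_1: "E_U_sackin 1 = 0"
  by (simp add: E_U_sackin_plane labelled_trees_1 sackin_Lf)

lemma E_U_sackin_Suc:
  assumes m: "m \<ge> 1"
  shows "E_U_sackin (Suc m) = (real m + 1) * (2 * E_U_sackin m + 1) / (2 * real m - 1)"
proof -
  let ?T = "real (\<Sum>t\<in>labelled_trees m. sackin t)" and ?P = "real (card (labelled_trees m))"
  have P: "?P > 0" using card_labelled_trees_pos[OF m] by simp
  have card: "real (card (labelled_trees (Suc m))) = (4 * real m - 2) * ?P"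
    using card_labelled_trees_Suc[OF m] m by (simp add: of_nat_diff)
  have sum: "real (\<Sum>t\<in>labelled_trees (Suc m). sackin t) = 2 * (real m + 1) * (2 * ?T + ?P)"
    unfolding sackin_sum_labelled_trees_Suc[OF m] of_nat_mult of_nat_add of_nat_numeral by simp
  have "2 * real m - 1 \<noteq> 0" using m by simp
  then show ?thesis
    unfolding E_U_sackin_plane[of "Suc m"] E_U_sackin_plane[of m] card sum
    using P by (simp add: field_simps)
qed

text \<open>The tree recurrence and the recurrence of the hypergeometric sum agree, with E(2) = 2.\<close>
lemma E_U_sackin_hg_sum: "n \<ge> 2 \<Longrightarrow> E_U_sackin n = real n / (2 * real n - 3) * hg_sum (n - 2)"
proof (induction n rule: nat_induct_at_least)
  case base
  have "E_U_sackin 2 = 2"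
    using E_U_sackin_Suc[of 1] E_U_sackin_1 by (simp add: numeral_2_eq_2)
  then show ?case by (simp add: hg_sum_def hg_ratio_def)
next
  case (Suc n)
  define N where "N = n - 2"
  have n: "n = N + 2" using Suc.hyps by (simp add: N_def)
  have IH: "E_U_sackin n = (real N + 2) / (2 * real N + 1) * hg_sum N"
    using Suc.IH n by (simp add: algebra_simps)
  have "E_U_sackin (Suc n) = (real N + 3) * (2 * E_U_sackin n + 1) / (2 * real N + 3)"
    using E_U_sackin_Suc[of n] n by (simp add: algebra_simps)
  also have "\<dots> = (real N + 3) / (2 * real N + 3) * hg_sum (Suc N)"
  proof -
    have rec: "hg_sum (Suc N) = (2*(real N+2) * hg_sum N + (2*real N+1)) / (2*real N+1)"
      using hg_sum_rec[of N] by (simp add: eq_divide_eq add_pos_pos mult.commute del: of_nat_Suc)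
    have "2 * real N + 1 \<noteq> 0" "2 * real N + 3 \<noteq> 0"
      by (simp_all add: add_pos_pos)
    then show ?thesis unfolding IH rec by (simp add: field_simps)
  qed
  finally have "E_U_sackin (Suc n) = (real N + 3) / (2 * real N + 3) * hg_sum (Suc N)" .
  moreover have "Suc n - 2 = Suc N" "real (Suc n) = real N + 3" "2 * (real N + 3) - 3 = 2 * real N + 3"
    using n by simp_all
  ultimately show ?case by (simp only:)
qed

lemma pochhammer_2: "pochhammer (2::real) k = (real k + 1) * fact k"
  by (induction k) (auto simp: pochhammer_Suc algebra_simps)

lemma pochhammer_ratio: "pochhammer (- real N) k / pochhammer (- (2 * real N)) k = hg_ratio N k"
proof -
  have "pochhammer (- real N) k / pochhammer (- (2 * real N)) k
      = (\<Prod>i<k. (- real N + real i) / (- (2 * real N) + real i))"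
    by (simp add: pochhammer_prod prod_dividef atLeast0LessThan)
  also have "\<dots> = hg_ratio N k"
    unfolding hg_ratio_def
    by (rule prod.cong) (simp_all add: minus_divide_divide[of "real N - real _", symmetric])
  finally show ?thesis .
qed

lemma hg_summand:
  assumes "n \<ge> 2"
  shows "pochhammer (2::real) k * pochhammer 2 k * pochhammer (2 - real n) k
         / (pochhammer 1 k * pochhammer (4 - 2 * real n) k) * 2 ^ k / fact k
       = (real k + 1)^2 * 2^k * hg_ratio (n-2) k"
proof -
  have shift: "2 - real n = - real (n-2)" "4 - 2 * real n = - (2 * real (n-2))"
    using assms by (simp_all add: of_nat_diff)
  have cancel: "(a*F)*(a*F)*P1/(F*P2)*t/F = a^2*t*(P1/P2)" if "F \<noteq> 0" for a F P1 P2 t :: real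
    using that by (simp add: field_simps power2_eq_square)
  show ?thesis
    unfolding shift pochhammer_2 pochhammer_fact[symmetric] pochhammer_ratio[symmetric]
    by (rule cancel) simp
qed

theorem mainTheorem18:
  fixes n :: nat
  assumes "n \<ge> 3"
  shows "E_U_sackin n =
    real n / (2 * real n - 3) *
      (\<Sum>k = 0..n-2. pochhammer (2::real) k * pochhammer 2 k * pochhammer (2 - real n) k
         / (pochhammer 1 k * pochhammer (4 - 2 * real n) k) * 2 ^ k / fact k)"
proof -
  have "(\<Sum>k = 0..n-2. pochhammer (2::real) k * pochhammer 2 k * pochhammer (2 - real n) k
         / (pochhammer 1 k * pochhammer (4 - 2 * real n) k) * 2 ^ k / fact k) = hg_sum (n-2)"
    unfolding hg_sum_def using hg_summand assms by (intro sum.cong) auto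
  then show ?thesis
    using E_U_sackin_hg_sum assms by simp
qed
end
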